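(* If $n_1<n_2<n_3\neq N/2$, then the geometric realization of $C(n_1,n_2,n_3)$ is homeomorphic to a disjoint union of tori (one for each of its $\gcd(n_1,n_2,n_3)$ components).
   Context: Standing conventions: $N,n_1,n_2,n_3$ are positive integers with $n_1+n_2+n_3=N$ and $1\le n_1\le n_2\le n_3<N$. $C(n_1,n_2,n_3)$ denotes the abstract simplicial complex whose vertex set is $\mathbb{Z}/N$, whose 2-simplices are all sets of the form $\{k,k+n_1,k+n_1+n_2\}$ or $\{k,k-n_1,k-n_1-n_2\}$ for $k\in\mathbb{Z}/N$ (i.e. the orbit of $\{0,n_1,n_1+n_2\}$ under all translations $x\mapsto x+t$ and inversions $x\mapsto t-x$ of $\mathbb{Z}/N$), and whose 1-simplices are all sets $\{k,k+n_i\}$ with $k\in\mathbb{Z}/N$, $i\in\{1,2,3\}$. *)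

theory Defs
  imports "HOL-Analysis.Analysis"
begin

text \<open>The complex C(n1,n2,n3): vertex set Z/N is represented by {0..<N} (nat, arithmetic mod N).
  Its simplices (as vertex sets) are the 2-simplices, the 1-simplices and the vertices.\<close>

definition cyc_triangles :: "nat \<Rightarrow> nat \<Rightarrow> nat \<Rightarrow> nat set set" where
  "cyc_triangles n1 n2 n3 = (let N = n1 + n2 + n3 in
     {{k mod N, (k + n1) mod N, (k + n1 + n2) mod N} | k. k < N} \<union>
     {{k mod N, (k + N - n1) mod N, (k + 2 * N - n1 - n2) mod N} | k. k < N})"

definition cyc_edges :: "nat \<Rightarrow> nat \<Rightarrow> nat \<Rightarrow> nat set set" where
  "cyc_edges n1 n2 n3 = (let N = n1 + n2 + n3 in
     {{k mod N, (k + n) mod N} | k n. k < N \<and> n \<in> {n1, n2, n3}})"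

definition cyc_complex :: "nat \<Rightarrow> nat \<Rightarrow> nat \<Rightarrow> nat set set" where
  "cyc_complex n1 n2 n3 = cyc_triangles n1 n2 n3 \<union> cyc_edges n1 n2 n3 \<union>
     {{k} | k. k < n1 + n2 + n3}"

text \<open>Geometric realization of an abstract simplicial complex K with (finite) simplices
  made of natural-number vertices: vertex v is the v-th standard basis vector of the
  space nat => real (product topology); the realization is the union of the convex hulls
  of the simplices, written in barycentric coordinates.\<close>

definition geom_real :: "nat set set \<Rightarrow> (nat \<Rightarrow> real) set" where
  "geom_real K = {x. \<exists>\<sigma>\<in>K. (\<forall>i. 0 \<le> x i) \<and> (\<forall>i. i \<notin> \<sigma> \<longrightarrow> x i = 0) \<and> (\<Sum>i\<in>\<sigma>. x i) = 1}"

end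

theory Submission
  imports Defs
begin

text \<open>Send the lattice point \<open>z\<close> of the \<open>c\<close>-th copy of the plane to the vertex
  \<open>c + z1 n1 + z2 n2 mod N\<close>. This maps the triangulation of the plane by the lines \<open>x \<in> \<int>\<close>,
  \<open>y \<in> \<int>\<close>, \<open>x - y \<in> \<int>\<close> simplicially onto \<open>C(n1, n2, n3)\<close>, and it is a local homeomorphism
  because every lattice point and its six neighbours receive distinct labels; this is
  where \<open>2 n3 \<noteq> N\<close> is needed. Two points have the same image exactly when they lie in the same
  copy and differ by a vector of the lattice \<open>L = {z. N dvd z1 n1 + z2 n2}\<close>, and the copies
  \<open>c < gcd n1 (gcd n2 n3)\<close> together cover the complex. So the realization is a disjoint union of
  copies of the torus \<open>\<real>\<^sup>2 / L\<close>; a triangular basis of \<open>L\<close> parametrizes each copy by the unit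
  square with the same identifications as \<open>S\<^sup>1 \<times> S\<^sup>1\<close>.\<close>

section \<open>Tent functions of the triangulated plane\<close>

text \<open>The tent function of a lattice point: on each triangle of the triangulation, the tents of
  its three corners are the barycentric coordinates and all other tents vanish.\<close>

definition hat :: "int \<times> int \<Rightarrow> real \<times> real \<Rightarrow> real" where
  "hat z P = max 0 (1 - max \<bar>fst P - of_int (fst z)\<bar>
      (max \<bar>snd P - of_int (snd z)\<bar> \<bar>(fst P - of_int (fst z)) - (snd P - of_int (snd z))\<bar>))"

definition of_int_pair :: "int \<times> int \<Rightarrow> real \<times> real" where
  "of_int_pair w = (of_int (fst w), of_int (snd w))"

lemma of_int_pair_diff: "of_int_pair (a - b) = of_int_pair a - of_int_pair b"
  unfolding of_int_pair_def by (cases a, cases b) auto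

lemma hat_translate: "hat (z + l) (P + of_int_pair l) = hat z P"
  unfolding hat_def of_int_pair_def by (cases z, cases l, cases P) (simp add: algebra_simps)

lemma isCont_hat: "isCont (hat z) P"
proof -
  have "continuous_on UNIV (hat z)"
    unfolding hat_def by (intro continuous_intros)
  then show ?thesis
    by (simp add: continuous_on_eq_continuous_at del: split_paired_All)
qed

lemma hat_offset:
  "hat (w + (i, j)) (of_int_pair w + (s, t)) =
     max 0 (1 - max \<bar>s - of_int i\<bar> (max \<bar>t - of_int j\<bar> \<bar>(s - of_int i) - (t - of_int j)\<bar>))"
  unfolding hat_def of_int_pair_def by (cases w) (simp add: algebra_simps)

lemma int_cases_near_0_1:
  fixes i :: int
  shows "real_of_int i \<le> -1 \<or> i = 0 \<or> i = 1 \<or> real_of_int i \<ge> 2"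
  by (cases "i \<le> -1 \<or> i \<ge> 2") auto

lemma hat_upper_triangle:
  assumes "0 \<le> t" "t \<le> s" "s \<le> 1"
  shows "hat z (of_int_pair w + (s, t)) =
    (if z = w then 1 - s else if z = w + (1, 0) then s - t else if z = w + (1, 1) then t else 0)"
proof -
  define i j where "i = fst (z - w)" and "j = snd (z - w)"
  have z: "z = w + (i, j)"
    by (simp add: i_def j_def prod_eq_iff)
  have "max 0 (1 - max \<bar>s - of_int i\<bar> (max \<bar>t - of_int j\<bar> \<bar>(s - of_int i) - (t - of_int j)\<bar>)) =
    (if i = 0 \<and> j = 0 then 1 - s else if i = 1 \<and> j = 0 then s - t else if i = 1 \<and> j = 1 then t else 0)"
    using int_cases_near_0_1[of i] int_cases_near_0_1[of j] assms
    by (elim disjE) (auto simp: abs_if max_def)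
  then show ?thesis
    unfolding z hat_offset by (simp add: prod_eq_iff)
qed

lemma hat_lower_triangle:
  assumes "0 \<le> s" "s \<le> t" "t \<le> 1"
  shows "hat z (of_int_pair w + (s, t)) =
    (if z = w then 1 - t else if z = w + (0, 1) then t - s else if z = w + (1, 1) then s else 0)"
proof -
  define i j where "i = fst (z - w)" and "j = snd (z - w)"
  have z: "z = w + (i, j)"
    by (simp add: i_def j_def prod_eq_iff)
  have "max 0 (1 - max \<bar>s - of_int i\<bar> (max \<bar>t - of_int j\<bar> \<bar>(s - of_int i) - (t - of_int j)\<bar>)) =
    (if i = 0 \<and> j = 0 then 1 - t else if i = 0 \<and> j = 1 then t - s else if i = 1 \<and> j = 1 then s else 0)"
    using int_cases_near_0_1[of i] int_cases_near_0_1[of j] assms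
    by (elim disjE) (auto simp: abs_if max_def)
  then show ?thesis
    unfolding z hat_offset by (simp add: prod_eq_iff)
qed

definition cell :: "real \<times> real \<Rightarrow> (int \<times> int) set" where
  "cell P = {\<lfloor>fst P\<rfloor>..\<lfloor>fst P\<rfloor> + 1} \<times> {\<lfloor>snd P\<rfloor>..\<lfloor>snd P\<rfloor> + 1}"

lemma finite_cell: "finite (cell P)"
  unfolding cell_def by simp

lemma floor_near:
  fixes x :: real
  assumes "\<bar>x - of_int a\<bar> < 1"
  shows "a \<in> {\<lfloor>x\<rfloor>..\<lfloor>x\<rfloor> + 1}"
  using assms by (simp add: abs_less_iff) linarith

lemma hat_support:
  assumes "hat z P \<noteq> 0"
  shows "z \<in> cell P"
proof -
  have "\<bar>fst P - of_int (fst z)\<bar> < 1" "\<bar>snd P - of_int (snd z)\<bar> < 1"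
    using assms unfolding hat_def by (auto simp: max_def split: if_splits)
  then show ?thesis
    unfolding cell_def using floor_near by (cases z) auto
qed

lemma plane_point_in_unit_square:
  obtains w s t where "P = of_int_pair w + (s, t)" "0 \<le> s" "s < 1" "0 \<le> t" "t < 1"
proof
  show "P = of_int_pair (\<lfloor>fst P\<rfloor>, \<lfloor>snd P\<rfloor>) + (fst P - \<lfloor>fst P\<rfloor>, snd P - \<lfloor>snd P\<rfloor>)"
    by (simp add: of_int_pair_def)
qed linarith+

section \<open>Integer lattices\<close>

lemma dvd_bounded_cases:
  fixes m :: int
  assumes "N dvd m" "\<bar>m\<bar> < 2 * N"
  shows "m = 0 \<or> m = N \<or> m = - N"
proof -
  obtain k where m: "m = N * k"
    using assms(1) by (auto elim: dvdE)
  have "N > 0"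
    using assms(2) by linarith
  then have "\<bar>k\<bar> < 2"
    using assms(2) by (simp add: m abs_mult)
  then have "k = 0 \<or> k = 1 \<or> k = -1"
    by linarith
  then show ?thesis
    using m by auto
qed

lemma dvd_mult_iff_div_gcd_dvd:
  fixes x a N :: int
  assumes "N \<noteq> 0"
  shows "N dvd x * a \<longleftrightarrow> N div gcd a N dvd x"
proof -
  define d a' p where "d = gcd a N" and "a' = a div d" and "p = N div d"
  have "d \<noteq> 0"
    using assms by (simp add: d_def)
  have a: "a = a' * d" and N: "N = p * d"
    by (simp_all add: d_def a'_def p_def)
  have "coprime p a'"
    using div_gcd_coprime[of a N] assms by (simp add: d_def a'_def p_def coprime_commute)
  have "N dvd x * a \<longleftrightarrow> p * d dvd (x * a') * d"
    by (subst a, subst N) (simp add: ac_simps)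
  also have "\<dots> \<longleftrightarrow> p dvd x"
    using \<open>d \<noteq> 0\<close> \<open>coprime p a'\<close> by (simp add: coprime_dvd_mult_left_iff)
  finally show ?thesis
    by (simp add: p_def d_def)
qed

lemma kernel_second_coordinates:
  fixes a b N y :: int
  assumes "N \<noteq> 0"
  shows "(\<exists>x. N dvd x * a + y * b) \<longleftrightarrow> gcd a N div gcd (gcd a N) b dvd y"
proof -
  define d e where "d = gcd a N" and "e = gcd d b"
  have "d \<noteq> 0" "e \<noteq> 0"
    using assms by (simp_all add: d_def e_def)
  obtain s m where d: "d = s * e" and b: "b = m * e" and "coprime s m"
    using gcd_coprime_exists[of d b] \<open>e \<noteq> 0\<close> unfolding e_def by blast
  have "d div e = s"
    using d \<open>e \<noteq> 0\<close> by simp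
  show ?thesis
    unfolding d_def[symmetric] e_def[symmetric] \<open>d div e = s\<close>
  proof
    assume "\<exists>x. N dvd x * a + y * b"
    then obtain x where "N dvd x * a + y * b"
      by blast
    moreover have "d dvd N"
      by (simp add: d_def)
    ultimately have "d dvd x * a + y * b"
      by (rule dvd_trans[rotated])
    then have "d dvd y * b"
      by (simp add: d_def dvd_add_right_iff)
    then have "s * e dvd (y * m) * e"
      by (simp add: d b ac_simps)
    then show "s dvd y"
      using \<open>e \<noteq> 0\<close> \<open>coprime s m\<close> by (simp add: coprime_dvd_mult_left_iff)
  next
    assume "s dvd y"
    then obtain j where y: "y = s * j"
      by (rule dvdE)
    obtain u v where uv: "u * a + v * N = d"
      using bezout_int[of a N] by (auto simp: d_def)
    have "(- u * m * j) * a + y * b = m * j * (d - u * a)"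
      unfolding y d b by (simp add: algebra_simps)
    also have "\<dots> = N * (m * j * v)"
      unfolding uv[symmetric] by (simp add: algebra_simps)
    finally show "\<exists>x. N dvd x * a + y * b"
      by (intro exI[of _ "- u * m * j"]) simp
  qed
qed

lemma kernel_lattice_triangular_basis:
  fixes a b N :: int
  assumes "N > 0"
  obtains p q r where "p > 0" "r > 0"
    "\<And>x y. N dvd x * a + y * b \<longleftrightarrow> (\<exists>i j. x = i * p + j * q \<and> y = j * r)"
proof -
  define p where "p = N div gcd a N"
  define r where "r = gcd a N div gcd (gcd a N) b"
  have "gcd a N > 0"
    using assms by simp
  then have "p > 0" "r > 0"
    using zdvd_imp_le[OF gcd_dvd2 assms] zdvd_imp_le[OF gcd_dvd1 \<open>gcd a N > 0\<close>, of b]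
    by (simp_all add: p_def r_def pos_imp_zdiv_pos_iff)
  obtain q where q: "N dvd q * a + r * b"
    using kernel_second_coordinates[where N = N and a = a and b = b and y = r] assms by (auto simp: r_def)
  have pa: "N dvd p * a"
    using dvd_mult_iff_div_gcd_dvd[where N = N and a = a and x = p] assms by (simp add: p_def)
  have "N dvd x * a + y * b \<longleftrightarrow> (\<exists>i j. x = i * p + j * q \<and> y = j * r)" for x y
  proof
    assume xy: "N dvd x * a + y * b"
    then have "r dvd y"
      using kernel_second_coordinates[where N = N and a = a and b = b and y = y] assms
      by (auto simp: r_def)
    then obtain j where j: "y = j * r"
      by (metis dvd_def mult.commute)
    have "N dvd (x * a + y * b) - j * (q * a + r * b)"
      using xy q by simp
    moreover have "(x * a + y * b) - j * (q * a + r * b) = (x - j * q) * a"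
      by (simp add: j algebra_simps)
    ultimately have "p dvd x - j * q"
      using dvd_mult_iff_div_gcd_dvd[where N = N and a = a and x = "x - j * q"] assms by (simp add: p_def)
    then obtain i where "x - j * q = i * p"
      by (metis dvd_def mult.commute)
    then show "\<exists>i j. x = i * p + j * q \<and> y = j * r"
      using j by (intro exI[of _ i] exI[of _ j]) simp
  next
    assume "\<exists>i j. x = i * p + j * q \<and> y = j * r"
    then obtain i j where "x = i * p + j * q" "y = j * r"
      by blast
    then have "x * a + y * b = i * (p * a) + j * (q * a + r * b)"
      by (simp add: algebra_simps)
    then show "N dvd x * a + y * b"
      using pa q by simp
  qed
  with \<open>p > 0\<close> \<open>r > 0\<close> that show thesis
    by blast
qed

section \<open>Topology\<close>

lemma homeomorphic_images_same_fibres: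
  fixes f :: "'a::t2_space \<Rightarrow> 'b::t2_space" and g :: "'a \<Rightarrow> 'c::t2_space"
  assumes "compact D" "continuous_on D f" "continuous_on D g"
    and fibres: "\<And>x y. x \<in> D \<Longrightarrow> y \<in> D \<Longrightarrow> f x = f y \<longleftrightarrow> g x = g y"
  shows "f ` D homeomorphic g ` D"
proof -
  define h where "h = g \<circ> inv_into D f"
  have hf: "h (f x) = g x" if "x \<in> D" for x
  proof -
    have "inv_into D f (f x) \<in> D" "f (inv_into D f (f x)) = f x"
      using that by (simp_all add: inv_into_into f_inv_into_f)
    then show ?thesis
      using fibres[of "inv_into D f (f x)" x] that by (simp add: h_def)
  qed
  have "\<And>U. {x \<in> D. f x \<in> U} = D \<inter> f -` U"
    by blast
  then have quotient: "quotient_map (top_of_set D) (top_of_set (f ` D)) f"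
    using Abstract_Topology_2.continuous_imp_quotient_map[OF assms(2) refl assms(1)]
    by (simp add: quotient_map_def)
  have "continuous_on D (h \<circ> f)"
    using assms(3) by (rule continuous_on_eq) (simp add: hf)
  then have "continuous_map (top_of_set D) euclidean (h \<circ> f)"
    by (simp only: continuous_map_iff_continuous)
  then have "continuous_map (top_of_set (f ` D)) euclidean h"
    by (rule continuous_compose_quotient_map[OF quotient])
  then have "continuous_on (f ` D) h"
    by (simp only: continuous_map_iff_continuous)
  moreover have "h ` f ` D = g ` D"
  proof -
    have "h ` f ` D = (\<lambda>x. h (f x)) ` D"
      by (simp add: image_image)
    also have "\<dots> = g ` D"
      by (rule image_cong) (simp_all add: hf)
    finally show ?thesis .
  qed
  moreover have "inj_on h (f ` D)"
  proof (rule inj_onI)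
    fix y1 y2
    assume "y1 \<in> f ` D" "y2 \<in> f ` D" "h y1 = h y2"
    then obtain x1 x2 where "x1 \<in> D" "x2 \<in> D" "y1 = f x1" "y2 = f x2" "g x1 = g x2"
      by (auto simp: hf)
    then show "y1 = y2"
      using fibres by blast
  qed
  ultimately show ?thesis
    using homeomorphic_compact[OF compact_continuous_image[OF assms(2,1)]] by blast
qed

lemma sphere_eq_cis_image: "sphere (0::complex) 1 = (\<lambda>s. cis (2 * pi * s)) ` {0..1}"
proof
  show "sphere 0 1 \<subseteq> (\<lambda>s. cis (2 * pi * s)) ` {0..1}"
  proof
    fix z :: complex
    assume "z \<in> sphere 0 1"
    then have "z = cis (2 * pi * (Arg2pi z / (2 * pi)))"
      using Arg2pi_eq[of z] by (simp add: cis_conv_exp)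
    moreover have "Arg2pi z / (2 * pi) \<in> {0..1}"
      using Arg2pi[of z] by simp
    ultimately show "z \<in> (\<lambda>s. cis (2 * pi * s)) ` {0..1}"
      by blast
  qed
qed auto

lemma cis_2pi_eq_iff: "cis (2 * pi * s) = cis (2 * pi * s') \<longleftrightarrow> (\<exists>i::int. s = s' + of_int i)"
proof
  assume "cis (2 * pi * s) = cis (2 * pi * s')"
  then have "cis (2 * pi * s - 2 * pi * s') = 1"
    by (simp add: cis_divide[symmetric])
  then have "cos (2 * pi * s - 2 * pi * s') = 1"
    by (metis cis.sel(1) one_complex.sel(1))
  then obtain n :: int where "2 * pi * s - 2 * pi * s' = of_int n * 2 * pi"
    using cos_one_2pi_int by blast
  then have "(2 * pi) * s = (2 * pi) * (s' + of_int n)"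
    by (simp add: algebra_simps)
  then have "s = s' + of_int n"
    by simp
  then show "\<exists>i::int. s = s' + of_int i"
    by blast
next
  assume "\<exists>i::int. s = s' + of_int i"
  then obtain i :: int where "s = s' + of_int i"
    by blast
  then have "cis (2 * pi * s) = cis (2 * pi * s') * cis (2 * pi * of_int i)"
    by (simp add: cis_mult algebra_simps)
  then show "cis (2 * pi * s) = cis (2 * pi * s')"
    by simp
qed

section \<open>Labelling the plane by vertices of the complex\<close>

locale cyclic_triangulation =
  fixes n1 n2 n3 N :: nat
  assumes N_eq: "N = n1 + n2 + n3"
    and n1_pos: "1 \<le> n1" and n1_less_n2: "n1 < n2" and n2_less_n3: "n2 < n3"
    and not_half: "2 * n3 \<noteq> N"
begin

definition weight :: "int \<times> int \<Rightarrow> int" where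
  "weight z = fst z * int n1 + snd z * int n2"

definition label :: "nat \<Rightarrow> int \<times> int \<Rightarrow> nat" where
  "label c z = nat ((int c + weight z) mod int N)"

definition plane_map :: "nat \<Rightarrow> real \<times> real \<Rightarrow> nat \<Rightarrow> real" where
  "plane_map c P j = (\<Sum>z \<in> {z \<in> cell P. label c z = j}. hat z P)"

text \<open>The lattice points sharing a triangle with the origin.\<close>

definition star :: "(int \<times> int) set" where
  "star = {(0, 0), (1, 0), (-1, 0), (0, 1), (0, -1), (1, 1), (-1, -1)}"

lemma N_pos: "N > 0"
  using N_eq n1_pos by simp

lemma weight_add: "weight (a + b) = weight a + weight b"
  unfolding weight_def by (cases a, cases b) (simp add: algebra_simps)

lemma weight_diff: "weight (a - b) = weight a - weight b"
  unfolding weight_def by (cases a, cases b) (simp add: algebra_simps)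

lemma int_label: "int (label c z) = (int c + weight z) mod int N"
  unfolding label_def using N_pos by simp

lemma label_less: "label c z < N"
  unfolding label_def using N_pos by (simp add: nat_less_iff)

lemma label_eq_iff_dvd: "label c a = label c b \<longleftrightarrow> int N dvd weight a - weight b"
  unfolding label_def using N_pos by (simp add: nat_eq_iff mod_eq_dvd_iff)

lemma label_translate: "int N dvd weight l \<Longrightarrow> label c (z + l) = label c z"
  unfolding label_eq_iff_dvd weight_add by simp

lemma label_add:
  assumes "int N dvd int m - weight d"
  shows "label c (z + d) = (label c z + m) mod N"
proof -
  have "int N dvd weight d - int m"
    using assms by (simp add: dvd_diff_commute)
  then have "int (label c (z + d)) = (int c + weight z + int m) mod int N"
    by (simp add: int_label weight_add add.assoc mod_eq_dvd_iff)
  also have "\<dots> = ((int c + weight z) mod int N + int m) mod int N"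
    by (simp add: mod_add_left_eq)
  also have "\<dots> = int ((label c z + m) mod N)"
    by (simp add: int_label zmod_int)
  finally show ?thesis
    by simp
qed

text \<open>Distinct points of the star have weights that differ mod \<open>N\<close>; this is where
  \<open>2 n3 \<noteq> N\<close> enters, separating \<open>(1, 1)\<close> from \<open>(-1, -1)\<close>.\<close>

lemma weight_inj_on_star:
  assumes "d \<in> star" "d' \<in> star" "int N dvd weight d - weight d'"
  shows "d = d'"
proof (rule ccontr)
  assume "d \<noteq> d'"
  have "int N = int n1 + int n2 + int n3" "int n1 \<ge> 1" "int n1 < int n2" "int n2 < int n3"
    "2 * int n3 \<noteq> int N"
    using N_eq n1_pos n1_less_n2 n2_less_n3 not_half by linarith+
  with \<open>d \<noteq> d'\<close> assms(1,2) have "weight d - weight d' \<notin> {0, int N, - int N}"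
    "\<bar>weight d - weight d'\<bar> < 2 * int N"
    unfolding star_def weight_def by auto
  then show False
    using dvd_bounded_cases[OF assms(3)] by blast
qed

lemma label_eq_on_star_iff:
  assumes "a - z \<in> star" "d \<in> star"
  shows "label c a = label c (z + d) \<longleftrightarrow> a - z = d"
proof
  assume "label c a = label c (z + d)"
  then have "int N dvd weight (a - z) - weight d"
    by (simp add: label_eq_iff_dvd weight_diff weight_add algebra_simps)
  then show "a - z = d"
    by (rule weight_inj_on_star[OF assms])
qed (metis add.commute diff_add_cancel)

lemma labels_of_upper_triangle:
  "label c (w + (1, 0)) = (label c w + n1) mod N"
  "label c (w + (1, 1)) = (label c w + n1 + n2) mod N"
  using label_add[of n1 "(1, 0)"] label_add[of "n1 + n2" "(1, 1)"]
  by (simp_all add: weight_def add.assoc)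

lemma labels_of_edges:
  "label c (w + (0, 1)) = (label c w + n2) mod N"
  "label c (w + (-1, -1)) = (label c w + n3) mod N"
  by (rule label_add, simp add: weight_def N_eq algebra_simps)+

lemma labels_of_lower_triangle:
  "label c (w + (-1, 0)) = (label c w + N - n1) mod N"
  "label c (w + (-1, -1)) = (label c w + 2 * N - n1 - n2) mod N"
proof -
  have "int (N - n1) - weight (-1, 0) = int N * 1" "int (2 * N - n1 - n2) - weight (-1, -1) = int N * 2"
    using N_eq by (simp_all add: weight_def of_nat_diff)
  then have "label c (w + (-1, 0)) = (label c w + (N - n1)) mod N"
    "label c (w + (-1, -1)) = (label c w + (2 * N - n1 - n2)) mod N"
    by (intro label_add, metis dvd_triv_left)+
  moreover have "label c w + (N - n1) = label c w + N - n1"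
    "label c w + (2 * N - n1 - n2) = label c w + 2 * N - n1 - n2"
    using N_eq by simp_all
  ultimately show "label c (w + (-1, 0)) = (label c w + N - n1) mod N"
    "label c (w + (-1, -1)) = (label c w + 2 * N - n1 - n2) mod N"
    by simp_all
qed

lemma label_neq_on_star:
  assumes "d \<in> star" "d' \<in> star" "d \<noteq> d'"
  shows "label c (w + d) \<noteq> label c (w + d')"
  using weight_inj_on_star[OF assms(1,2)] assms(3)
  unfolding label_eq_iff_dvd weight_add by auto

lemma labels_distinct_upper:
  "label c w \<noteq> label c (w + (1, 0))" "label c w \<noteq> label c (w + (1, 1))"
  "label c (w + (1, 0)) \<noteq> label c (w + (1, 1))"
  using label_neq_on_star[of "(0, 0)" "(1, 0)" c w] label_neq_on_star[of "(0, 0)" "(1, 1)" c w]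
    label_neq_on_star[of "(1, 0)" "(1, 1)" c w]
  by (auto simp: star_def add_0_right[of w, unfolded zero_prod_def])

lemma labels_distinct_lower:
  "label c w \<noteq> label c (w + (0, 1))" "label c w \<noteq> label c (w + (1, 1))"
  "label c (w + (0, 1)) \<noteq> label c (w + (1, 1))"
  using label_neq_on_star[of "(0, 0)" "(0, 1)" c w] label_neq_on_star[of "(0, 0)" "(1, 1)" c w]
    label_neq_on_star[of "(0, 1)" "(1, 1)" c w]
  by (auto simp: star_def add_0_right[of w, unfolded zero_prod_def])

definition ncomp :: nat where
  "ncomp = gcd n1 (gcd n2 n3)"

lemma ncomp_dvd: "ncomp dvd n1" "ncomp dvd n2" "ncomp dvd n3" "ncomp dvd N"
proof -
  show "ncomp dvd n1" "ncomp dvd n2" "ncomp dvd n3"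
    unfolding ncomp_def by (meson dvd_trans gcd_dvd1 gcd_dvd2)+
  then show "ncomp dvd N"
    unfolding N_eq by simp
qed

lemma ncomp_pos: "ncomp > 0"
  unfolding ncomp_def using n1_pos by simp

lemma ncomp_eq_gcd_N: "gcd n1 (gcd n2 N) = ncomp"
proof (rule dvd_antisym)
  let ?d = "gcd n1 (gcd n2 N)"
  have "?d dvd n1" "?d dvd n2" "?d dvd N"
    by (auto intro: dvd_trans)
  moreover have "?d dvd N - n1 - n2"
    using calculation by (intro dvd_diff_nat) auto
  ultimately show "?d dvd ncomp"
    unfolding ncomp_def using N_eq by simp
qed (use ncomp_dvd in simp)

lemma ncomp_bezout: "\<exists>a b e::int. a * int n1 + b * int n2 + e * int N = int ncomp"
proof -
  obtain u v :: int where uv: "u * int n2 + v * int N = gcd (int n2) (int N)"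
    using bezout_int by blast
  obtain p r :: int where pr: "p * int n1 + r * gcd (int n2) (int N) = gcd (int n1) (gcd (int n2) (int N))"
    using bezout_int by blast
  have "gcd (int n1) (gcd (int n2) (int N)) = int ncomp"
    using ncomp_eq_gcd_N by (simp flip: gcd_int_def)
  then have "int ncomp = p * int n1 + r * (u * int n2 + v * int N)"
    using pr uv by simp
  then have "p * int n1 + (r * u) * int n2 + (r * v) * int N = int ncomp"
    by (simp add: algebra_simps)
  then show ?thesis
    by blast
qed

text \<open>Every weight is a multiple of \<open>ncomp\<close>, so \<open>c mod ncomp\<close> is an invariant of the
  vertices reached from the \<open>c\<close>-th plane: the planes \<open>c < ncomp\<close> cover distinct components.\<close>

lemma label_mod_ncomp: "c < ncomp \<Longrightarrow> label c z mod ncomp = c"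
proof -
  assume "c < ncomp"
  have "int ncomp dvd weight z"
    unfolding weight_def using ncomp_dvd by simp
  then have "(int c + weight z) mod int ncomp = int c mod int ncomp"
    by (simp add: mod_eq_dvd_iff)
  moreover have "int ncomp dvd int N"
    using ncomp_dvd by simp
  ultimately have "int (label c z) mod int ncomp = int c"
    using \<open>c < ncomp\<close> unfolding int_label by (simp add: mod_mod_cancel)
  then show ?thesis
    by (metis of_nat_eq_iff zmod_int)
qed

lemma label_surj:
  assumes "k < N"
  obtains w where "label (k mod ncomp) w = k"
proof -
  obtain a b e :: int where abe: "a * int n1 + b * int n2 + e * int N = int ncomp"
    using ncomp_bezout by blast
  have "int ncomp dvd int k - int (k mod ncomp)"
    by (simp add: mod_eq_dvd_iff zmod_int)
  then obtain q where q: "int k - int (k mod ncomp) = int ncomp * q"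
    by (auto elim: dvdE)
  have "int (k mod ncomp) + weight (q * a, q * b) = int k - q * e * int N"
    using q by (simp add: weight_def algebra_simps flip: abe)
  then have "int (label (k mod ncomp) (q * a, q * b)) = (int k - q * e * int N) mod int N"
    by (simp only: int_label)
  also have "\<dots> = int k mod int N"
    by (simp add: mod_eq_dvd_iff)
  also have "\<dots> = int k"
    using assms by simp
  finally show thesis
    using that by simp
qed

lemma plane_map_eq_sum:
  assumes "finite B" "\<And>z. hat z P \<noteq> 0 \<Longrightarrow> z \<in> B"
  shows "plane_map c P j = (\<Sum>z\<in>B. if label c z = j then hat z P else 0)"
proof -
  have vanish: "hat z P = 0" if "z \<notin> cell P \<or> z \<notin> B" for z
    using that assms(2) hat_support by blast
  have "plane_map c P j = (\<Sum>z\<in>cell P. if label c z = j then hat z P else 0)"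
    unfolding plane_map_def by (simp add: sum.inter_filter finite_cell)
  also have "\<dots> = (\<Sum>z\<in>cell P \<union> B. if label c z = j then hat z P else 0)"
    by (rule sum.mono_neutral_left) (use assms vanish in \<open>auto simp: finite_cell\<close>)
  also have "\<dots> = (\<Sum>z\<in>B. if label c z = j then hat z P else 0)"
    by (rule sum.mono_neutral_right) (use assms vanish in \<open>auto simp: finite_cell\<close>)
  finally show ?thesis .
qed

lemma plane_map_upper:
  assumes "0 \<le> t" "t \<le> s" "s \<le> 1"
  shows "plane_map c (of_int_pair w + (s, t)) j =
    (if label c w = j then 1 - s else 0) + (if label c (w + (1, 0)) = j then s - t else 0)
      + (if label c (w + (1, 1)) = j then t else 0)"
proof -
  have "plane_map c (of_int_pair w + (s, t)) j =
      (\<Sum>z\<in>{w, w + (1, 0), w + (1, 1)}. if label c z = j then hat z (of_int_pair w + (s, t)) else 0)"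
    by (rule plane_map_eq_sum) (auto simp: hat_upper_triangle[OF assms] split: if_splits)
  then show ?thesis
    by (cases w) (simp add: hat_upper_triangle[OF assms])
qed

lemma plane_map_lower:
  assumes "0 \<le> s" "s \<le> t" "t \<le> 1"
  shows "plane_map c (of_int_pair w + (s, t)) j =
    (if label c w = j then 1 - t else 0) + (if label c (w + (0, 1)) = j then t - s else 0)
      + (if label c (w + (1, 1)) = j then s else 0)"
proof -
  have "plane_map c (of_int_pair w + (s, t)) j =
      (\<Sum>z\<in>{w, w + (0, 1), w + (1, 1)}. if label c z = j then hat z (of_int_pair w + (s, t)) else 0)"
    by (rule plane_map_eq_sum) (auto simp: hat_lower_triangle[OF assms] split: if_splits)
  then show ?thesis
    by (cases w) (simp add: hat_lower_triangle[OF assms])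
qed

lemma plane_map_translate:
  assumes "int N dvd weight l"
  shows "plane_map c (P + of_int_pair l) = plane_map c P"
proof
  fix j
  have "plane_map c (P + of_int_pair l) j =
      (\<Sum>z\<in>(\<lambda>z. z + l) ` cell P. if label c z = j then hat z (P + of_int_pair l) else 0)"
  proof (rule plane_map_eq_sum)
    fix z
    assume "hat z (P + of_int_pair l) \<noteq> 0"
    then have "z - l \<in> cell P"
      using hat_translate[of "z - l" l P] hat_support by simp
    then show "z \<in> (\<lambda>z. z + l) ` cell P"
      by (rule rev_image_eqI) simp
  qed (simp add: finite_cell)
  also have "\<dots> = (\<Sum>z\<in>cell P. if label c (z + l) = j then hat (z + l) (P + of_int_pair l) else 0)"
    by (subst sum.reindex) (auto simp: inj_on_def)
  also have "\<dots> = plane_map c P j"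
    unfolding label_translate[OF assms] hat_translate
    by (rule plane_map_eq_sum[symmetric]) (auto simp: finite_cell hat_support)
  finally show "plane_map c (P + of_int_pair l) j = plane_map c P j" .
qed

lemma continuous_plane_map: "continuous_on UNIV (plane_map c)"
proof (rule continuous_on_coordinatewise_then_product)
  fix j
  show "continuous_on UNIV (\<lambda>P. plane_map c P j)"
    unfolding continuous_on_eq_continuous_at[OF open_UNIV]
  proof
    fix P0 :: "real \<times> real"
    define B where "B = {\<lfloor>fst P0\<rfloor> - 1..\<lfloor>fst P0\<rfloor> + 2} \<times> {\<lfloor>snd P0\<rfloor> - 1..\<lfloor>snd P0\<rfloor> + 2}"
    have "finite B"
      unfolding B_def by simp
    have cont: "isCont (\<lambda>P. \<Sum>z\<in>{z\<in>B. label c z = j}. hat z P) P0"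
      by (intro continuous_intros isCont_hat)
    show "isCont (\<lambda>P. plane_map c P j) P0"
    proof (rule continuous_transform_within[OF cont, of "1/2"])
      fix P
      assume "P \<in> UNIV" "dist P P0 < 1/2"
      then have "\<bar>fst P - fst P0\<bar> < 1/2" "\<bar>snd P - snd P0\<bar> < 1/2"
        using dist_fst_le[of P P0] dist_snd_le[of P P0] by (auto simp: dist_real_def)
      then have "cell P \<subseteq> B"
        unfolding cell_def B_def by (auto, linarith+)
      then have "plane_map c P j = (\<Sum>z\<in>B. if label c z = j then hat z P else 0)"
        by (intro plane_map_eq_sum \<open>finite B\<close>) (use hat_support in blast)
      then show "(\<Sum>z\<in>{z\<in>B. label c z = j}. hat z P) = plane_map c P j"
        by (simp add: sum.inter_filter \<open>finite B\<close>)
    qed auto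
  qed
qed


lemma cyc_triangles_eq: "cyc_triangles n1 n2 n3 =
   {{k mod N, (k + n1) mod N, (k + n1 + n2) mod N} | k. k < N} \<union>
   {{k mod N, (k + N - n1) mod N, (k + 2 * N - n1 - n2) mod N} | k. k < N}"
  unfolding cyc_triangles_def Let_def N_eq ..

lemma upper_triangle_labels:
  "{label c w, label c (w + (1, 0)), label c (w + (1, 1))} \<in> cyc_triangles n1 n2 n3"
  unfolding cyc_triangles_eq labels_of_upper_triangle using label_less[of c w]
  by (intro UnI1 CollectI exI[of _ "label c w"]) simp

lemma lower_triangle_labels:
  "{label c w, label c (w + (0, 1)), label c (w + (1, 1))} \<in> cyc_triangles n1 n2 n3"
proof -
  let ?k = "label c (w + (1, 1))"
  have "w + (0, 1) = (w + (1, 1)) + (-1, 0)" and w: "w = (w + (1, 1)) + (-1, -1)"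
    by (cases w, simp)+
  then have "label c (w + (0, 1)) = (?k + N - n1) mod N"
    using labels_of_lower_triangle(1)[of c "w + (1, 1)"] by metis
  moreover have "label c w = (?k + 2 * N - n1 - n2) mod N"
    using labels_of_lower_triangle(2)[of c "w + (1, 1)"] w by metis
  moreover have "?k mod N = ?k"
    using label_less by simp
  ultimately show ?thesis
    unfolding cyc_triangles_eq using label_less[of c "w + (1, 1)"]
    by (intro UnI2 CollectI exI[of _ ?k]) auto
qed

lemma triangle_cases:
  assumes "\<tau> \<in> cyc_triangles n1 n2 n3"
  obtains (upper) c w where "c < ncomp" "\<tau> = {label c w, label c (w + (1, 0)), label c (w + (1, 1))}"
    | (lower) c w where "c < ncomp" "\<tau> = {label c w, label c (w + (0, 1)), label c (w + (1, 1))}"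
proof -
  have c: "k mod ncomp < ncomp" for k
    using ncomp_pos by simp
  consider (up) k where "k < N" "\<tau> = {k mod N, (k + n1) mod N, (k + n1 + n2) mod N}"
    | (down) k where "k < N" "\<tau> = {k mod N, (k + N - n1) mod N, (k + 2 * N - n1 - n2) mod N}"
    using assms unfolding cyc_triangles_eq by blast
  then show thesis
  proof cases
    case up
    obtain w where "label (k mod ncomp) w = k"
      using label_surj[OF up(1)] .
    then show thesis
      using upper[OF c, of k w] up by (simp add: labels_of_upper_triangle)
  next
    case down
    obtain w where w: "label (k mod ncomp) w = k"
      using label_surj[OF down(1)] .
    let ?c = "k mod ncomp" and ?w = "w + (-1, -1)"
    have "label ?c ?w = (k + 2 * N - n1 - n2) mod N" "label ?c (?w + (0, 1)) = (k + N - n1) mod N"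
      "label ?c (?w + (1, 1)) = k"
      using labels_of_lower_triangle[of ?c w] w by (cases w; simp)+
    then show thesis
      using lower[OF c, of k ?w] down by auto
  qed
qed

lemma simplex_subset_triangle:
  assumes "\<sigma> \<in> cyc_complex n1 n2 n3"
  obtains \<tau> where "\<tau> \<in> cyc_triangles n1 n2 n3" "\<sigma> \<subseteq> \<tau>"
proof -
  consider "\<sigma> \<in> cyc_triangles n1 n2 n3"
    | (edge) k n where "k < N" "n \<in> {n1, n2, n3}" "\<sigma> = {k mod N, (k + n) mod N}"
    | (vertex) k where "k < N" "\<sigma> = {k}"
    using assms unfolding cyc_complex_def cyc_edges_def Let_def N_eq by blast
  then show thesis
  proof cases
    case vertex
    obtain w where "label (k mod ncomp) w = k"
      using label_surj[OF vertex(1)] .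
    then show thesis
      using that[OF upper_triangle_labels[of "k mod ncomp" w]] vertex(2) by auto
  next
    case edge
    define c where "c = k mod ncomp"
    obtain w where w: "label c w = k"
      using label_surj[OF edge(1)] unfolding c_def .
    have \<sigma>: "\<sigma> = {label c w, (label c w + n) mod N}"
      using edge w by simp
    have "label c (w + (-1, -1) + (1, 1)) = label c w"
      by (cases w) simp
    then show thesis
      using edge(2) that[OF upper_triangle_labels[of c w]] that[OF lower_triangle_labels[of c w]]
        that[OF upper_triangle_labels[of c "w + (-1, -1)"]]
      unfolding \<sigma> labels_of_upper_triangle(1) labels_of_edges by auto
  qed (use that in blast)
qed

section \<open>Fibres and image of the plane maps\<close>

text \<open>The position of a point relative to a lattice point \<open>z\<close> of its triangle can be read off
  from its image alone, because the star of \<open>z\<close> carries distinct labels.\<close>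

definition local_position :: "nat \<Rightarrow> int \<times> int \<Rightarrow> (nat \<Rightarrow> real) \<Rightarrow> real \<times> real" where
  "local_position c z x = (\<Sum>d\<in>star. x (label c (z + d)) *\<^sub>R of_int_pair d)"

lemma local_position_translate:
  assumes "int N dvd weight l"
  shows "local_position c (z + l) x = local_position c z x"
proof -
  have "label c (z + l + d) = label c (z + d)" for d
    using label_translate[OF assms, of c "z + d"] by (simp add: ac_simps)
  then show ?thesis
    unfolding local_position_def by simp
qed

lemma local_position_reconstructs:
  assumes star: "v1 - z \<in> star" "v2 - z \<in> star" "v3 - z \<in> star"
    and x: "\<And>j. x j = (if label c v1 = j then a1 else 0) + (if label c v2 = j then a2 else 0)
      + (if label c v3 = j then a3 else 0)"
    and "a1 + a2 + a3 = 1"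
  shows "a1 *\<^sub>R of_int_pair v1 + a2 *\<^sub>R of_int_pair v2 + a3 *\<^sub>R of_int_pair v3
    = of_int_pair z + local_position c z x"
proof -
  have "local_position c z x = (\<Sum>d\<in>star. (if v1 - z = d then a1 *\<^sub>R of_int_pair d else 0)
      + (if v2 - z = d then a2 *\<^sub>R of_int_pair d else 0) + (if v3 - z = d then a3 *\<^sub>R of_int_pair d else 0))"
    unfolding local_position_def
    by (rule sum.cong) (auto simp: x label_eq_on_star_iff[OF star(1)] label_eq_on_star_iff[OF star(2)]
        label_eq_on_star_iff[OF star(3)] scaleR_add_left)
  also have "\<dots> = a1 *\<^sub>R of_int_pair (v1 - z) + a2 *\<^sub>R of_int_pair (v2 - z) + a3 *\<^sub>R of_int_pair (v3 - z)"
    using star by (simp add: sum.distrib sum.delta star_def)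
  also have "\<dots> = a1 *\<^sub>R of_int_pair v1 + a2 *\<^sub>R of_int_pair v2 + a3 *\<^sub>R of_int_pair v3
      - (a1 + a2 + a3) *\<^sub>R of_int_pair z"
    by (simp add: of_int_pair_diff algebra_simps scaleR_add_left)
  finally show ?thesis
    using assms(5) by simp
qed

definition carrier_triangle ::
  "nat \<Rightarrow> real \<times> real \<Rightarrow> int \<times> int \<Rightarrow> int \<times> int \<Rightarrow> int \<times> int \<Rightarrow> real \<Rightarrow> real \<Rightarrow> real \<Rightarrow> bool" where
  "carrier_triangle c P v1 v2 v3 a1 a2 a3 \<longleftrightarrow>
     0 \<le> a1 \<and> 0 \<le> a2 \<and> 0 \<le> a3 \<and> a1 + a2 + a3 = 1 \<and>
     P = a1 *\<^sub>R of_int_pair v1 + a2 *\<^sub>R of_int_pair v2 + a3 *\<^sub>R of_int_pair v3 \<and>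
     (\<forall>j. plane_map c P j = (if label c v1 = j then a1 else 0) + (if label c v2 = j then a2 else 0)
        + (if label c v3 = j then a3 else 0)) \<and>
     (\<forall>v\<in>{v1, v2, v3}. \<forall>v'\<in>{v1, v2, v3}. v - v' \<in> star) \<and>
     {label c v1, label c v2, label c v3} \<in> cyc_triangles n1 n2 n3"

lemma carrier_triangle_exists:
  obtains v1 v2 v3 a1 a2 a3 where "carrier_triangle c P v1 v2 v3 a1 a2 a3"
proof -
  obtain w s t where P: "P = of_int_pair w + (s, t)" and st: "0 \<le> s" "s < 1" "0 \<le> t" "t < 1"
    using plane_point_in_unit_square .
  show thesis
  proof (cases "t \<le> s")
    case True
    have "carrier_triangle c P w (w + (1, 0)) (w + (1, 1)) (1 - s) (s - t) t"
      unfolding carrier_triangle_def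
    proof (intro conjI)
      show "P = (1 - s) *\<^sub>R of_int_pair w + (s - t) *\<^sub>R of_int_pair (w + (1, 0)) + t *\<^sub>R of_int_pair (w + (1, 1))"
        unfolding P of_int_pair_def by (cases w) (simp add: algebra_simps)
      show "\<forall>v\<in>{w, w + (1, 0), w + (1, 1)}. \<forall>v'\<in>{w, w + (1, 0), w + (1, 1)}. v - v' \<in> star"
        by (cases w) (simp add: star_def zero_prod_def)
    qed (use True st in \<open>auto simp: P plane_map_upper upper_triangle_labels\<close>)
    then show thesis
      using that by blast
  next
    case False
    have "carrier_triangle c P w (w + (0, 1)) (w + (1, 1)) (1 - t) (t - s) s"
      unfolding carrier_triangle_def
    proof (intro conjI)
      show "P = (1 - t) *\<^sub>R of_int_pair w + (t - s) *\<^sub>R of_int_pair (w + (0, 1)) + s *\<^sub>R of_int_pair (w + (1, 1))"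
        unfolding P of_int_pair_def by (cases w) (simp add: algebra_simps)
      show "\<forall>v\<in>{w, w + (0, 1), w + (1, 1)}. \<forall>v'\<in>{w, w + (0, 1), w + (1, 1)}. v - v' \<in> star"
        by (cases w) (simp add: star_def zero_prod_def)
    qed (use False st in \<open>auto simp: P plane_map_lower lower_triangle_labels\<close>)
    then show thesis
      using that by blast
  qed
qed

lemma plane_map_in_realization: "plane_map c P \<in> geom_real (cyc_complex n1 n2 n3)"
proof -
  obtain v1 v2 v3 a1 a2 a3 where T: "carrier_triangle c P v1 v2 v3 a1 a2 a3"
    using carrier_triangle_exists .
  let ?\<sigma> = "{label c v1, label c v2, label c v3}"
  have x: "\<And>j. plane_map c P j = (if label c v1 = j then a1 else 0) + (if label c v2 = j then a2 else 0)
      + (if label c v3 = j then a3 else 0)"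
    and a: "0 \<le> a1" "0 \<le> a2" "0 \<le> a3" "a1 + a2 + a3 = 1"
    and \<sigma>: "?\<sigma> \<in> cyc_triangles n1 n2 n3"
    using T unfolding carrier_triangle_def by blast+
  have "(\<Sum>i\<in>?\<sigma>. plane_map c P i) = (\<Sum>i\<in>?\<sigma>. if label c v1 = i then a1 else 0)
      + (\<Sum>i\<in>?\<sigma>. if label c v2 = i then a2 else 0) + (\<Sum>i\<in>?\<sigma>. if label c v3 = i then a3 else 0)"
    unfolding x by (simp add: sum.distrib)
  also have "\<dots> = 1"
    using a(4) by (simp add: sum.delta')
  finally have "(\<Sum>i\<in>?\<sigma>. plane_map c P i) = 1" .
  with a \<sigma> show ?thesis
    unfolding geom_real_def cyc_complex_def by (auto simp: x intro!: bexI[of _ ?\<sigma>])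
qed

lemma carrier_triangle_reconstructs:
  assumes T: "carrier_triangle c P v1 v2 v3 a1 a2 a3" and "z \<in> {v1, v2, v3}"
  shows "P = of_int_pair z + local_position c z (plane_map c P)"
proof -
  have star: "v1 - z \<in> star" "v2 - z \<in> star" "v3 - z \<in> star"
    using assms unfolding carrier_triangle_def by blast+
  have x: "plane_map c P j = (if label c v1 = j then a1 else 0) + (if label c v2 = j then a2 else 0)
      + (if label c v3 = j then a3 else 0)" for j
    using T unfolding carrier_triangle_def by blast
  have a: "a1 + a2 + a3 = 1"
    and P: "P = a1 *\<^sub>R of_int_pair v1 + a2 *\<^sub>R of_int_pair v2 + a3 *\<^sub>R of_int_pair v3"
    using T unfolding carrier_triangle_def by blast+
  show ?thesis
    unfolding P[symmetric] by (rule local_position_reconstructs[OF star x a, folded P])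
qed

lemma carrier_triangle_plane_map:
  assumes "carrier_triangle c P v1 v2 v3 a1 a2 a3"
  shows "plane_map c P j = (if label c v1 = j then a1 else 0) + (if label c v2 = j then a2 else 0)
      + (if label c v3 = j then a3 else 0)"
  using assms unfolding carrier_triangle_def by blast

lemma carrier_triangle_vertex_of_label:
  assumes "carrier_triangle c P v1 v2 v3 a1 a2 a3" "plane_map c P j > 0"
  obtains z where "z \<in> {v1, v2, v3}" "label c z = j"
proof (rule ccontr)
  assume "\<not> thesis"
  then have "label c v1 \<noteq> j" "label c v2 \<noteq> j" "label c v3 \<noteq> j"
    using that by blast+
  then have "plane_map c P j = 0"
    by (simp add: carrier_triangle_plane_map[OF assms(1)])
  with assms(2) show False
    by simp
qed

lemma carrier_triangle_positive_vertex:
  assumes T: "carrier_triangle c P v1 v2 v3 a1 a2 a3"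
  obtains z where "z \<in> {v1, v2, v3}" "plane_map c P (label c z) > 0"
proof -
  have a: "0 \<le> a1" "0 \<le> a2" "0 \<le> a3" "a1 + a2 + a3 = 1"
    using T unfolding carrier_triangle_def by blast+
  have "a1 > 0 \<or> a2 > 0 \<or> a3 > 0"
    using a by linarith
  moreover have "a1 > 0 \<Longrightarrow> plane_map c P (label c v1) > 0"
    and "a2 > 0 \<Longrightarrow> plane_map c P (label c v2) > 0"
    and "a3 > 0 \<Longrightarrow> plane_map c P (label c v3) > 0"
    using a by (simp_all add: carrier_triangle_plane_map[OF T])
  ultimately show thesis
    using that by blast
qed


lemma plane_map_eq_imp_translate:
  assumes eq: "plane_map c P = plane_map c' P'" and "c < ncomp" "c' < ncomp"
  shows "c = c'" and "\<exists>l. int N dvd weight l \<and> P = P' + of_int_pair l"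
proof -
  obtain v1 v2 v3 a1 a2 a3 where T: "carrier_triangle c P v1 v2 v3 a1 a2 a3"
    using carrier_triangle_exists .
  obtain u1 u2 u3 b1 b2 b3 where T': "carrier_triangle c' P' u1 u2 u3 b1 b2 b3"
    using carrier_triangle_exists .
  obtain z where z: "z \<in> {v1, v2, v3}" "plane_map c P (label c z) > 0"
    using carrier_triangle_positive_vertex[OF T] .
  then have "plane_map c' P' (label c z) > 0"
    using eq by simp
  then obtain z' where z': "z' \<in> {u1, u2, u3}" "label c' z' = label c z"
    using carrier_triangle_vertex_of_label[OF T'] by blast
  show "c = c'"
    using label_mod_ncomp[OF assms(2), of z] label_mod_ncomp[OF assms(3), of z'] z'(2) by simp
  then have l: "int N dvd weight (z - z')"
    using z'(2) by (simp add: label_eq_iff_dvd weight_diff dvd_diff_commute)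
  have "P = of_int_pair z + local_position c z (plane_map c P)"
    using carrier_triangle_reconstructs[OF T z(1)] .
  also have "\<dots> = of_int_pair z + local_position c' z' (plane_map c' P')"
    using local_position_translate[OF l, of c' z' "plane_map c' P'"] eq \<open>c = c'\<close> by simp
  also have "\<dots> = P' + of_int_pair (z - z')"
    using carrier_triangle_reconstructs[OF T' z'(1)] by (simp add: of_int_pair_diff algebra_simps)
  finally show "\<exists>l. int N dvd weight l \<and> P = P' + of_int_pair l"
    using l by blast
qed

lemma plane_map_onto_upper:
  fixes c :: nat and w :: "int \<times> int" and x :: "nat \<Rightarrow> real"
  defines "L0 \<equiv> label c w" and "L1 \<equiv> label c (w + (1, 0))" and "L2 \<equiv> label c (w + (1, 1))"
  assumes "\<And>i. 0 \<le> x i" and "\<And>i. i \<notin> {L0, L1, L2} \<Longrightarrow> x i = 0" and "x L0 + x L1 + x L2 = 1"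
  shows "plane_map c (of_int_pair w + (x L1 + x L2, x L2)) = x"
proof
  fix j
  have "plane_map c (of_int_pair w + (x L1 + x L2, x L2)) j =
      (if L0 = j then x L0 else 0) + (if L1 = j then x L1 else 0) + (if L2 = j then x L2 else 0)"
    using assms(4)[of L0] assms(4)[of L1] assms(4)[of L2] assms(6) unfolding L0_def L1_def L2_def
    by (subst plane_map_upper) (auto simp: algebra_simps)
  also have "\<dots> = x j"
    using labels_distinct_upper[of c w] assms(5)[of j] by (auto simp: L0_def L1_def L2_def)
  finally show "plane_map c (of_int_pair w + (x L1 + x L2, x L2)) j = x j" .
qed

lemma plane_map_onto_lower:
  fixes c :: nat and w :: "int \<times> int" and x :: "nat \<Rightarrow> real"
  defines "L0 \<equiv> label c w" and "L1 \<equiv> label c (w + (0, 1))" and "L2 \<equiv> label c (w + (1, 1))"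
  assumes "\<And>i. 0 \<le> x i" and "\<And>i. i \<notin> {L0, L1, L2} \<Longrightarrow> x i = 0" and "x L0 + x L1 + x L2 = 1"
  shows "plane_map c (of_int_pair w + (x L2, x L1 + x L2)) = x"
proof
  fix j
  have "plane_map c (of_int_pair w + (x L2, x L1 + x L2)) j =
      (if L0 = j then x L0 else 0) + (if L1 = j then x L1 else 0) + (if L2 = j then x L2 else 0)"
    using assms(4)[of L0] assms(4)[of L1] assms(4)[of L2] assms(6) unfolding L0_def L1_def L2_def
    by (subst plane_map_lower) (auto simp: algebra_simps)
  also have "\<dots> = x j"
    using labels_distinct_lower[of c w] assms(5)[of j] by (auto simp: L0_def L1_def L2_def)
  finally show "plane_map c (of_int_pair w + (x L2, x L1 + x L2)) j = x j" .
qed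

lemma realization_point_in_plane_image:
  assumes "x \<in> geom_real (cyc_complex n1 n2 n3)"
  obtains c P where "c < ncomp" "plane_map c P = x"
proof -
  obtain \<sigma> where \<sigma>: "\<sigma> \<in> cyc_complex n1 n2 n3" and nonneg: "\<And>i. 0 \<le> x i"
    and zero: "\<And>i. i \<notin> \<sigma> \<Longrightarrow> x i = 0" and sum: "(\<Sum>i\<in>\<sigma>. x i) = 1"
    using assms unfolding geom_real_def by blast
  obtain \<tau> where \<tau>: "\<tau> \<in> cyc_triangles n1 n2 n3" "\<sigma> \<subseteq> \<tau>"
    using simplex_subset_triangle[OF \<sigma>] .
  have "finite \<tau>"
    using \<tau>(1) unfolding cyc_triangles_eq by auto
  have zero\<tau>: "\<And>i. i \<notin> \<tau> \<Longrightarrow> x i = 0"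
    using zero \<tau>(2) by blast
  have sum\<tau>: "(\<Sum>i\<in>\<tau>. x i) = 1"
    using sum sum.mono_neutral_right[OF \<open>finite \<tau>\<close> \<tau>(2), of x] zero by auto
  from \<tau>(1) show thesis
  proof (cases rule: triangle_cases)
    case (upper c w)
    then have "x (label c w) + x (label c (w + (1, 0))) + x (label c (w + (1, 1))) = 1"
      using sum\<tau> labels_distinct_upper[of c w] by simp
    then show thesis
      using that[OF upper(1) plane_map_onto_upper] nonneg zero\<tau> upper(2) by blast
  next
    case (lower c w)
    then have "x (label c w) + x (label c (w + (0, 1))) + x (label c (w + (1, 1))) = 1"
      using sum\<tau> labels_distinct_lower[of c w] by simp
    then show thesis
      using that[OF lower(1) plane_map_onto_lower] nonneg zero\<tau> lower(2) by blast
  qed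
qed

end

section \<open>Parametrization by tori\<close>

definition torus_chart :: "nat \<times> real \<times> real \<Rightarrow> nat \<times> complex \<times> complex" where
  "torus_chart x = (fst x, cis (2 * pi * fst (snd x)), cis (2 * pi * snd (snd x)))"

lemma torus_chart_image:
  "torus_chart ` (C \<times> ({0..1} \<times> {0..1})) = C \<times> (sphere 0 1 \<times> sphere 0 1)"
  unfolding torus_chart_def sphere_eq_cis_image by force

lemma continuous_on_torus_chart: "continuous_on S torus_chart"
  unfolding torus_chart_def by (intro continuous_intros)

lemma torus_chart_eq_iff:
  "torus_chart x = torus_chart y \<longleftrightarrow>
     fst x = fst y \<and> (\<exists>i::int. fst (snd x) = fst (snd y) + of_int i)
       \<and> (\<exists>j::int. snd (snd x) = snd (snd y) + of_int j)"
  unfolding torus_chart_def by (simp add: cis_2pi_eq_iff)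

locale torus_parametrization = cyclic_triangulation +
  fixes p q r :: int
  assumes p_pos: "p > 0" and r_pos: "r > 0"
    and period_lattice: "\<And>x y. int N dvd weight (x, y) \<longleftrightarrow> (\<exists>i j. x = i * p + j * q \<and> y = j * r)"
begin

definition square_map :: "real \<times> real \<Rightarrow> real \<times> real" where
  "square_map st = (fst st * p + snd st * q, snd st * r)"

definition realization_chart :: "nat \<times> real \<times> real \<Rightarrow> nat \<Rightarrow> real" where
  "realization_chart x = plane_map (fst x) (square_map (snd x))"

lemma square_map_add: "square_map (x + y) = square_map x + square_map y"
  unfolding square_map_def by (simp add: algebra_simps)

lemma square_map_of_int: "square_map (of_int i, of_int j) = of_int_pair (i * p + j * q, j * r)"
  unfolding square_map_def of_int_pair_def by simp

lemma plane_map_square_map_eq_iff: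
  assumes "c < ncomp" "c' < ncomp"
  shows "plane_map c (square_map x) = plane_map c' (square_map y) \<longleftrightarrow>
    c = c' \<and> (\<exists>i::int. fst x = fst y + of_int i) \<and> (\<exists>j::int. snd x = snd y + of_int j)"
proof
  assume eq: "plane_map c (square_map x) = plane_map c' (square_map y)"
  obtain l where "int N dvd weight l" and l: "square_map x = square_map y + of_int_pair l"
    using plane_map_eq_imp_translate(2)[OF eq assms] by blast
  then obtain i j where "fst l = i * p + j * q" "snd l = j * r"
    using period_lattice[of "fst l" "snd l"] by auto
  then have "l = (i * p + j * q, j * r)"
    by (simp add: prod_eq_iff)
  then have "square_map x = square_map (y + (of_int i, of_int j))"
    using l by (simp add: square_map_add square_map_of_int)
  then have "snd x * r = (snd y + j) * r" "fst x * p + snd x * q = (fst y + i) * p + (snd y + j) * q"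
    unfolding square_map_def by simp_all
  then have "snd x = snd y + j" "fst x = fst y + i"
    using p_pos r_pos by simp_all
  then show "c = c' \<and> (\<exists>i::int. fst x = fst y + of_int i) \<and> (\<exists>j::int. snd x = snd y + of_int j)"
    using plane_map_eq_imp_translate(1)[OF eq assms] by blast
next
  assume "c = c' \<and> (\<exists>i::int. fst x = fst y + of_int i) \<and> (\<exists>j::int. snd x = snd y + of_int j)"
  then obtain i j :: int where "c = c'" "x = y + (of_int i, of_int j)"
    by (auto simp: prod_eq_iff)
  moreover have "int N dvd weight (i * p + j * q, j * r)"
    using period_lattice by blast
  ultimately show "plane_map c (square_map x) = plane_map c' (square_map y)"
    by (simp add: square_map_add square_map_of_int plane_map_translate)
qed

lemma plane_map_eq_on_unit_square:
  obtains s t where "s \<in> {0..1}" "t \<in> {0..1}" "plane_map c P = plane_map c (square_map (s, t))"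
proof -
  define t where "t = snd P / r"
  define s where "s = (fst P - t * q) / p"
  have P: "P = square_map (s, t)"
    unfolding square_map_def s_def t_def using p_pos r_pos by (cases P) simp
  have "square_map (s, t) = square_map (s - \<lfloor>s\<rfloor>, t - \<lfloor>t\<rfloor>) + of_int_pair (\<lfloor>s\<rfloor> * p + \<lfloor>t\<rfloor> * q, \<lfloor>t\<rfloor> * r)"
    by (simp flip: square_map_of_int square_map_add)
  moreover have "int N dvd weight (\<lfloor>s\<rfloor> * p + \<lfloor>t\<rfloor> * q, \<lfloor>t\<rfloor> * r)"
    using period_lattice by blast
  ultimately have "plane_map c P = plane_map c (square_map (s - \<lfloor>s\<rfloor>, t - \<lfloor>t\<rfloor>))"
    using P by (simp add: plane_map_translate)
  moreover have "s - \<lfloor>s\<rfloor> \<in> {0..1}" "t - \<lfloor>t\<rfloor> \<in> {0..1}"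
    by simp_all linarith+
  ultimately show thesis
    using that by blast
qed

lemma realization_chart_image:
  "realization_chart ` ({..<ncomp} \<times> ({0..1} \<times> {0..1})) = geom_real (cyc_complex n1 n2 n3)"
proof
  show "realization_chart ` ({..<ncomp} \<times> ({0..1} \<times> {0..1})) \<subseteq> geom_real (cyc_complex n1 n2 n3)"
    unfolding realization_chart_def using plane_map_in_realization by blast
next
  show "geom_real (cyc_complex n1 n2 n3) \<subseteq> realization_chart ` ({..<ncomp} \<times> ({0..1} \<times> {0..1}))"
  proof
    fix x
    assume "x \<in> geom_real (cyc_complex n1 n2 n3)"
    then obtain c P where "c < ncomp" "plane_map c P = x"
      using realization_point_in_plane_image by blast
    moreover obtain s t where "s \<in> {0..1}" "t \<in> {0..1}" "plane_map c P = plane_map c (square_map (s, t))"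
      using plane_map_eq_on_unit_square .
    ultimately show "x \<in> realization_chart ` ({..<ncomp} \<times> ({0..1} \<times> {0..1}))"
      unfolding realization_chart_def by (intro rev_image_eqI[of "(c, s, t)"]) auto
  qed
qed

lemma continuous_on_realization_chart:
  "continuous_on ({..<ncomp} \<times> ({0..1} \<times> {0..1})) realization_chart"
proof -
  have "continuous_on ({c} \<times> ({0..1} \<times> {0..1})) realization_chart" for c
  proof (rule continuous_on_eq)
    show "continuous_on ({c} \<times> ({0..1} \<times> {0..1})) (\<lambda>x. plane_map c (square_map (snd x)))"
      unfolding square_map_def
      by (rule continuous_on_compose2[OF continuous_plane_map]) (auto intro!: continuous_intros)
  qed (auto simp: realization_chart_def)
  then have "continuous_on (\<Union>c\<in>{..<ncomp}. {c} \<times> ({0..1} \<times> {0..1})) realization_chart"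
    by (intro continuous_on_closed_Union) (auto intro: closed_Times)
  moreover have "(\<Union>c\<in>{..<ncomp}. {c} \<times> ({0..1::real} \<times> {0..1::real})) = {..<ncomp} \<times> ({0..1} \<times> {0..1})"
    by auto
  ultimately show ?thesis
    by simp
qed

lemma torus_chart_eq_iff_realization_chart_eq:
  assumes "x \<in> {..<ncomp} \<times> ({0..1} \<times> {0..1})" "y \<in> {..<ncomp} \<times> ({0..1} \<times> {0..1})"
  shows "torus_chart x = torus_chart y \<longleftrightarrow> realization_chart x = realization_chart y"
  using assms plane_map_square_map_eq_iff[of "fst x" "fst y" "snd x" "snd y"]
  unfolding torus_chart_eq_iff realization_chart_def by auto

lemma realization_homeomorphic_tori:
  "geom_real (cyc_complex n1 n2 n3) homeomorphic {..<ncomp} \<times> (sphere (0::complex) 1 \<times> sphere (0::complex) 1)"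
proof -
  have "torus_chart ` ({..<ncomp} \<times> ({0..1} \<times> {0..1})) homeomorphic
      realization_chart ` ({..<ncomp} \<times> ({0..1} \<times> {0..1}))"
    by (intro homeomorphic_images_same_fibres compact_Times finite_imp_compact compact_Icc
        continuous_on_torus_chart continuous_on_realization_chart
        torus_chart_eq_iff_realization_chart_eq) simp_all
  then show ?thesis
    unfolding torus_chart_image realization_chart_image by (rule homeomorphic_sym[THEN iffD1])
qed

end

theorem theorem6p5:
  fixes n1 n2 n3 N :: nat
  assumes "N = n1 + n2 + n3"
    and "1 \<le> n1" and "n1 < n2" and "n2 < n3" and "n3 < N"
    and "2 * n3 \<noteq> N"
  shows "geom_real (cyc_complex n1 n2 n3) homeomorphic
         ({..<gcd n1 (gcd n2 n3)} \<times> (sphere (0::complex) 1 \<times> sphere (0::complex) 1))"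
proof -
  interpret cyclic_triangulation n1 n2 n3 N
    using assms by unfold_locales auto
  have "int N > 0"
    using N_pos by simp
  then obtain p q r where "p > 0" "r > 0"
    and "\<And>x y. int N dvd x * int n1 + y * int n2 \<longleftrightarrow> (\<exists>i j. x = i * p + j * q \<and> y = j * r)"
    by (rule kernel_lattice_triangular_basis[where a = "int n1" and b = "int n2"]) auto
  then interpret torus_parametrization n1 n2 n3 N p q r
    by unfold_locales (simp_all add: weight_def)
  show ?thesis
    using realization_homeomorphic_tori by (simp add: ncomp_def)
qed

end
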